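(* Let $p>0$ and $m,n>\max(p+1,2)$ be integers. Then \begin{align*} \zeta_{G_{m,n,p}}(u)^{-1}=&-4u^{2m+2n-2p}+u^{2m+2n-4p}+2u^{m+2n-2p}+2u^{2m+n-2p}\\ &+u^{2n}+u^{2m}+2u^{m+n}-2u^{m+n-2p}-2u^{n}-2u^{m}+1. \end{align*}
   Context: For integers $p>0$ and $m,n>\max(p+1,2)$, $G_{m,n,p}$ is the graph obtained from a cycle $C_m$ and a cycle $C_n$ by identifying a path of $p$ consecutive edges of $C_m$ with a path of $p$ consecutive edges of $C_n$; equivalently, it consists of two distinct vertices joined by three internally disjoint paths of lengths $p$, $m-p$ and $n-p$. It has $m+n-p-1$ vertices and $m+n-p$ edges. For a finite connected graph $G$ with vertex set $V$, edge set $E$ and no vertex of degree $1$, let $r=|E|-|V|+1$, $\mathcal{A}$ the adjacency matrix, $\mathcal{Q}=D-I$ with $D$ the diagonal degree matrix; the reciprocal Ihara zeta function is $\zeta_G(u)^{-1}=(1-u^2)^{r-1}\det(I-\mathcal{A}u+\mathcal{Q}u^2)$. *)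

theory Defs
  imports "Jordan_Normal_Form.Determinant"
begin

text \<open>Finite simple graphs on the vertex set {0..<N}, given by a set E of
  undirected edges, each edge being a two-element set of vertices.\<close>

definition adj_mat :: "nat \<Rightarrow> nat set set \<Rightarrow> complex mat" where
  "adj_mat N E = mat N N (\<lambda>(i,j). if {i,j} \<in> E \<and> i \<noteq> j then 1 else 0)"

definition deg :: "nat \<Rightarrow> nat set set \<Rightarrow> nat \<Rightarrow> nat" where
  "deg N E i = card {j. j < N \<and> j \<noteq> i \<and> {i,j} \<in> E}"

definition Q_mat :: "nat \<Rightarrow> nat set set \<Rightarrow> complex mat" where
  "Q_mat N E = mat N N (\<lambda>(i,j). if i = j then of_nat (deg N E i) - 1 else 0)"

text \<open>Reciprocal Ihara zeta function
  (1-u^2)^(r-1) det(I - A u + Q u^2), with r = |E| - |V| + 1.\<close>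
definition ihara_zeta_inv :: "nat \<Rightarrow> nat set set \<Rightarrow> complex \<Rightarrow> complex" where
  "ihara_zeta_inv N E u =
     (1 - u^2) powi (int (card E) - int N) *
     det (1\<^sub>m N - u \<cdot>\<^sub>m adj_mat N E + (u^2) \<cdot>\<^sub>m Q_mat N E)"

definition path_edges :: "nat list \<Rightarrow> nat set set" where
  "path_edges xs = {{xs ! i, xs ! (i+1)} | i. i + 1 < length xs}"

text \<open>G_{m,n,p}: vertices 0 and 1 joined by three internally disjoint paths of
  lengths p, m-p, n-p; internal vertices are 2..p, p+1..m-1, m..m+n-p-2.
  The vertex set is {0..<m+n-p-1}.\<close>
definition Gmnp_vertices :: "nat \<Rightarrow> nat \<Rightarrow> nat \<Rightarrow> nat" where
  "Gmnp_vertices m n p = m + n - p - 1"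

definition Gmnp_edges :: "nat \<Rightarrow> nat \<Rightarrow> nat \<Rightarrow> nat set set" where
  "Gmnp_edges m n p =
     path_edges (0 # [2..<p+1] @ [1]) \<union>
     path_edges (0 # [p+1..<m] @ [1]) \<union>
     path_edges (0 # [m..<m+n-p-1] @ [1])"

end

(* The Ihara matrix I - A u + Q u^2 of G_{m,n,p} is that of a theta graph: the branch
   vertices 0 and 1 of degree 3, joined by three branches with a = p - 1, b = m - p - 1 and
   c = n - p - 1 internal vertices of degree 2.  Eliminating the internal vertices of a branch
   one at a time by Schur complements keeps the shape of the matrix: after r steps only the
   diagonal entry D(r+1)/D(r) of the last remaining vertex, its link to vertex 1 and the
   entry (1,1) have changed, where D(r) = 1 + u^2 + ... + u^(2r).  Once a branch is gone it
   leaves a correction on the 2 x 2 block of the branch vertices, so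
   det = D(a) D(b) D(c) (d^2 - e^2) for explicit d and e.  With (1 - u^2) D(k) = 1 - u^(2k+2)
   this becomes a polynomial in X = u^p, Y = u^(m-p), Z = u^(n-p).  The divisions need D(k)
   to be nonzero, so the identity is proved for real u in (0,1) first and extended to all u
   because both sides are polynomials in u. *)
theory Submission
  imports Defs
begin

section \<open>Determinants\<close>

lemma det_Schur_last:
  fixes A :: "'a::field mat"
  assumes A: "A \<in> carrier_mat (Suc n) (Suc n)" and nz: "A $$ (n,n) \<noteq> 0"
  shows "det A = A $$ (n,n) * det (mat n n (\<lambda>(i,j). A $$ (i,j) - A $$ (i,n) * A $$ (n,j) / A $$ (n,n)))"
proof -
  define E where "E = mat (Suc n) (Suc n)
    (\<lambda>(i,j). if i = j then 1 else if j = n then - A $$ (i,n) / A $$ (n,n) else (0::'a))"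
  define B where "B = E * A"
  have E: "E \<in> carrier_mat (Suc n) (Suc n)" and B: "B \<in> carrier_mat (Suc n) (Suc n)"
    unfolding B_def E_def using A by auto
  have "det E = 1"
  proof -
    have "upper_triangular E" unfolding E_def upper_triangular_def by auto
    moreover have "diag_mat E = map (\<lambda>i. 1) [0..<Suc n]" by (auto simp: diag_mat_def E_def)
    ultimately show ?thesis using E by (simp add: det_upper_triangular map_replicate_const)
  qed
  then have det_B: "det B = det A" unfolding B_def using det_mult[OF E A] by simp
  have B_entry: "B $$ (i,j) = (if i = n then A $$ (n,j) else A $$ (i,j) - A $$ (i,n) / A $$ (n,n) * A $$ (n,j))"
    if "i < Suc n" "j < Suc n" for i j
  proof -
    have "B $$ (i,j) = (\<Sum>l<Suc n. E $$ (i,l) * A $$ (l,j))"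
      unfolding B_def using that A E by (simp add: scalar_prod_def atLeast0LessThan)
    also have "\<dots> = (\<Sum>l<Suc n. (if l = i then A $$ (i,j) else 0)
        + (if l = n \<and> i \<noteq> n then - A $$ (i,n) / A $$ (n,n) * A $$ (n,j) else 0))"
      by (rule sum.cong) (use that in \<open>auto simp: E_def\<close>)
    finally show ?thesis using that by (simp add: sum.distrib)
  qed
  have "det B = (\<Sum>i<Suc n. B $$ (i,n) * cofactor B i n)"
    by (rule laplace_expansion_column[OF B]) simp
  also have "\<dots> = B $$ (n,n) * cofactor B n n"
    by (subst sum.remove[of _ n]) (auto simp: B_entry nz intro!: sum.neutral)
  also have "cofactor B n n = det (mat_delete B n n)"
    unfolding cofactor_def by (simp flip: power_mult_distrib mult_2)
  also have "mat_delete B n n = mat n n (\<lambda>(i,j). A $$ (i,j) - A $$ (i,n) * A $$ (n,j) / A $$ (n,n))"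
    by (rule eq_matI) (use B in \<open>auto simp: mat_delete_def B_entry\<close>)
  finally show ?thesis using det_B by (simp add: B_entry)
qed

lemma det_mat_cong:
  "(\<And>i j. i < n \<Longrightarrow> j < n \<Longrightarrow> f i j = g i j) \<Longrightarrow> det (mat n n (\<lambda>(i,j). f i j)) = det (mat n n (\<lambda>(i,j). g i j))"
  by (intro arg_cong[where f = det] eq_matI) auto

lemma det_mat_2:
  "det (mat 2 2 (\<lambda>(i,j). f i j)) = f 0 0 * f 1 1 - f 0 1 * (f 1 0 :: 'a::comm_ring_1)"
proof -
  let ?A = "mat 2 2 (\<lambda>(i,j). f i j)"
  have "det ?A = (\<Sum>i<2. ?A $$ (i,0) * cofactor ?A i 0)"
    by (rule laplace_expansion_column) auto
  also have "\<dots> = f 0 0 * cofactor ?A 0 0 + f 1 0 * cofactor ?A 1 0"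
    by (simp add: numeral_2_eq_2)
  also have "cofactor ?A 0 0 = f 1 1"
    unfolding cofactor_def by (subst det_single) (auto simp: mat_delete_def)
  also have "cofactor ?A 1 0 = - f 0 1"
    unfolding cofactor_def by (subst det_single) (auto simp: mat_delete_def)
  finally show ?thesis by (simp add: mult_ac)
qed

section \<open>The graph as a theta graph\<close>

lemma path_edges_conv: "path_edges xs = (\<lambda>i. {xs ! i, xs ! Suc i}) ` {..<length xs - 1}"
  unfolding path_edges_def by auto

lemma path_edges_Cons_Cons: "path_edges (x # y # ys) = insert {x,y} (path_edges (y # ys))"
  unfolding path_edges_conv by (simp add: lessThan_Suc_eq_insert_0 image_image)

lemma path_edges_single [simp]: "path_edges [x] = {}"
  unfolding path_edges_conv by simp

lemma card_path_edges:
  assumes "distinct xs" "length xs \<ge> 2"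
  shows "card (path_edges xs) = length xs - 1"
proof -
  have "inj_on (\<lambda>i. {xs ! i, xs ! Suc i}) {..<length xs - 1}"
  proof (rule inj_onI)
    fix i j assume i: "i \<in> {..<length xs - 1}" and j: "j \<in> {..<length xs - 1}"
      and "{xs ! i, xs ! Suc i} = {xs ! j, xs ! Suc j}"
    then have "xs ! i = xs ! j \<and> xs ! Suc i = xs ! Suc j \<or> xs ! i = xs ! Suc j \<and> xs ! Suc i = xs ! j"
      by (simp add: doubleton_eq_iff)
    then show "i = j"
      using i j nth_eq_iff_index_eq[OF assms(1)] by auto
  qed
  then show ?thesis unfolding path_edges_conv by (simp add: card_image)
qed

lemma path_edges_upt_append:
  assumes "s \<le> t"
  shows "path_edges ([s..<t] @ [v])
    = (if s = t then {} else insert {t-1, v} ((\<lambda>l. {l, Suc l}) ` {s..<t-1}))"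
  using assms
proof (induction "t - s" arbitrary: s)
  case (Suc d)
  then have split: "[s..<t] @ [v] = s # ([Suc s..<t] @ [v])" by (simp add: upt_conv_Cons)
  show ?case
  proof (cases "Suc s = t")
    case True
    then show ?thesis unfolding split by (auto simp: path_edges_Cons_Cons)
  next
    case False
    with Suc have IH: "path_edges ([Suc s..<t] @ [v]) = insert {t-1, v} ((\<lambda>l. {l, Suc l}) ` {Suc s..<t-1})"
      by simp
    have "Suc s < t" using False Suc.hyps(2) by simp
    then have "[Suc s..<t] @ [v] = Suc s # ([Suc (Suc s)..<t] @ [v])" by (simp add: upt_conv_Cons)
    then have "path_edges ([s..<t] @ [v]) = insert {s, Suc s} (path_edges ([Suc s..<t] @ [v]))"
      unfolding split by (simp only: path_edges_Cons_Cons)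
    also have "\<dots> = insert {t-1, v} ((\<lambda>l. {l, Suc l}) ` insert s {Suc s..<t-1})"
      unfolding IH by blast
    also have "insert s {Suc s..<t-1} = {s..<t-1}" using \<open>Suc s < t\<close> by auto
    finally show ?thesis using \<open>Suc s < t\<close> by simp
  qed
qed simp

definition path_adj :: "nat \<Rightarrow> nat \<Rightarrow> nat \<Rightarrow> nat \<Rightarrow> bool" where
  "path_adj s t i j = (if s = t then i = 0 \<and> j = 1 \<or> i = 1 \<and> j = 0 else
     i = 0 \<and> j = s \<or> i = s \<and> j = 0 \<or> i = t - 1 \<and> j = 1 \<or> i = 1 \<and> j = t - 1 \<or>
     s \<le> i \<and> j = i + 1 \<and> j < t \<or> s \<le> j \<and> i = j + 1 \<and> i < t)"

lemma path_adj_sym: "path_adj s t i j \<longleftrightarrow> path_adj s t j i"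
  unfolding path_adj_def by auto

lemma mem_path_edges_iff:
  assumes "2 \<le> s" "s \<le> t" "i \<noteq> j"
  shows "{i,j} \<in> path_edges (0 # [s..<t] @ [1]) \<longleftrightarrow> path_adj s t i j"
proof (cases "s = t")
  case True
  then have "path_edges (0 # [s..<t] @ [1]) = {{0,1}}" by (simp add: path_edges_Cons_Cons)
  with True show ?thesis unfolding path_adj_def by (simp add: doubleton_eq_iff)
next
  case False
  with assms have "[s..<t] @ [1] = s # ([Suc s..<t] @ [1])" by (simp add: upt_conv_Cons)
  then have edges: "path_edges (0 # [s..<t] @ [1]) = insert {0, s} (path_edges ([s..<t] @ [1]))"
    by (simp only: path_edges_Cons_Cons)
  have "{i,j} \<in> path_edges (0 # [s..<t] @ [1])
      \<longleftrightarrow> {i,j} = {0,s} \<or> {i,j} = {t-1,1} \<or> (\<exists>l. s \<le> l \<and> Suc l < t \<and> {i,j} = {l, Suc l})"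
    unfolding edges path_edges_upt_append[OF assms(2)] using False
    by (simp only: if_False insert_iff image_iff Bex_def atLeastLessThan_iff less_diff_conv) simp
  also have "\<dots> \<longleftrightarrow> path_adj s t i j"
    unfolding path_adj_def doubleton_eq_iff using assms False by auto
  finally show ?thesis .
qed

lemma path_adj_outside:
  assumes "2 \<le> s" "s \<le> t" "2 \<le> i" "i < s \<or> t \<le> i"
  shows "\<not> path_adj s t i j"
  using assms unfolding path_adj_def by auto

lemma path_neighbours:
  assumes "2 \<le> s" "s \<le> i" "i < t" "t \<le> N"
  shows "{j. j < N \<and> j \<noteq> i \<and> path_adj s t i j} = {if i = s then 0 else i - 1, if i = t - 1 then 1 else i + 1}"
  using assms unfolding path_adj_def by (intro Set.set_eqI) auto

definition branch_edges :: "nat \<Rightarrow> nat \<Rightarrow> nat set set" where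
  "branch_edges s t = path_edges (0 # [s..<t] @ [1])"

lemma Gmnp_edges_theta:
  "Gmnp_edges (a+b+2) (a+c+2) (a+1)
    = branch_edges 2 (a+2) \<union> branch_edges (a+2) (a+b+2) \<union> branch_edges (a+b+2) (a+b+c+2)"
  unfolding Gmnp_edges_def branch_edges_def by (simp add: add_ac)

lemma card_branch_edges: "2 \<le> s \<Longrightarrow> s \<le> t \<Longrightarrow> card (branch_edges s t) = t - s + 1"
  unfolding branch_edges_def by (subst card_path_edges) auto

lemma branch_edge_doubleton:
  assumes "2 \<le> s" "e \<in> branch_edges s t"
  obtains i j where "i \<noteq> j" "e = {i,j}"
proof -
  let ?xs = "0 # [s..<t] @ [1]"
  from assms obtain l where l: "l < length ?xs - 1" and e: "e = {?xs ! l, ?xs ! Suc l}"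
    unfolding branch_edges_def path_edges_conv by auto
  have "distinct ?xs" "l < length ?xs" "Suc l < length ?xs" using assms(1) l by auto
  then have "?xs ! l \<noteq> ?xs ! Suc l" by (metis nth_eq_iff_index_eq n_not_Suc_n)
  then show ?thesis using e by (rule that)
qed

lemma mem_branch_edges_iff:
  "2 \<le> s \<Longrightarrow> s \<le> t \<Longrightarrow> i \<noteq> j \<Longrightarrow> {i,j} \<in> branch_edges s t \<longleftrightarrow> path_adj s t i j"
  unfolding branch_edges_def by (rule mem_path_edges_iff)

lemma branch_edges_disjoint:
  assumes "2 \<le> s" "s \<le> t" "t \<le> s'" "s' < t'"
  shows "branch_edges s t \<inter> branch_edges s' t' = {}"
proof (rule ccontr)
  assume "branch_edges s t \<inter> branch_edges s' t' \<noteq> {}"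
  then obtain e where e: "e \<in> branch_edges s t" "e \<in> branch_edges s' t'" by blast
  then obtain i j where "i \<noteq> j" "e = {i,j}" using assms(1) by (elim branch_edge_doubleton)
  with e assms have "path_adj s t i j" "path_adj s' t' i j" by (simp_all add: mem_branch_edges_iff)
  with assms show False unfolding path_adj_def by (auto split: if_splits)
qed

(* a, b and c count the internal vertices of the three branches, which are {2..<a+2},
   {a+2..<a+b+2} and {a+b+2..<a+b+c+2}. *)
definition theta_adj :: "nat \<Rightarrow> nat \<Rightarrow> nat \<Rightarrow> nat \<Rightarrow> nat \<Rightarrow> bool" where
  "theta_adj a b c i j \<longleftrightarrow>
     path_adj 2 (a+2) i j \<or> path_adj (a+2) (a+b+2) i j \<or> path_adj (a+b+2) (a+b+c+2) i j"

lemma theta_adj_sym: "theta_adj a b c i j \<longleftrightarrow> theta_adj a b c j i"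
  unfolding theta_adj_def using path_adj_sym by blast

lemma theta_adj_on_branch:
  assumes "(s, t) \<in> {(2, a+2), (a+2, a+b+2), (a+b+2, a+b+c+2)}" "s \<le> i" "i < t"
  shows "theta_adj a b c i j \<longleftrightarrow> path_adj s t i j"
  using assms path_adj_outside[of _ _ i j] unfolding theta_adj_def by auto

lemma mem_Gmnp_edges_iff:
  assumes "i \<noteq> j"
  shows "{i,j} \<in> Gmnp_edges (a+b+2) (a+c+2) (a+1) \<longleftrightarrow> theta_adj a b c i j"
  unfolding Gmnp_edges_theta theta_adj_def Un_iff
  using mem_branch_edges_iff[OF _ _ assms] by simp

lemma card_Gmnp_edges:
  assumes "b \<ge> 1" "c \<ge> 1"
  shows "card (Gmnp_edges (a+b+2) (a+c+2) (a+1)) = a+b+c+3"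
proof -
  have fin: "finite (branch_edges s t)" for s t
    unfolding branch_edges_def path_edges_conv by simp
  have "branch_edges 2 (a+2) \<inter> branch_edges (a+2) (a+b+2) = {}"
    "branch_edges 2 (a+2) \<inter> branch_edges (a+b+2) (a+b+c+2) = {}"
    "branch_edges (a+2) (a+b+2) \<inter> branch_edges (a+b+2) (a+b+c+2) = {}"
    by (rule branch_edges_disjoint; use assms in simp)+
  then show ?thesis unfolding Gmnp_edges_theta
    by (simp add: card_Un_disjoint fin Int_Un_distrib2 card_branch_edges)
qed

lemma theta_degree:
  assumes "b \<ge> 1" "c \<ge> 1" "i < a+b+c+2"
  shows "card {j. j < a+b+c+2 \<and> j \<noteq> i \<and> theta_adj a b c i j} = (if i \<le> 1 then 3 else 2)"
proof -
  have "i = 0 \<or> i = 1 \<or> (\<exists>(s, t) \<in> {(2, a+2), (a+2, a+b+2), (a+b+2, a+b+c+2)}. s \<le> i \<and> i < t)"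
    using assms(3) by auto
  then consider "i = 0" | "i = 1" | s t where "(s, t) \<in> {(2, a+2), (a+2, a+b+2), (a+b+2, a+b+c+2)}" "s \<le> i" "i < t"
    by blast
  then show ?thesis
  proof cases
    case 1
    then have "{j. j < a+b+c+2 \<and> j \<noteq> i \<and> theta_adj a b c i j} = {if a = 0 then 1 else 2, a+2, a+b+2}"
      using assms by (auto simp: theta_adj_def path_adj_def split: if_splits)
    with 1 assms show ?thesis by simp
  next
    case 2
    then have "{j. j < a+b+c+2 \<and> j \<noteq> i \<and> theta_adj a b c i j} = {if a = 0 then 0 else a+1, a+b+1, a+b+c+1}"
      using assms by (auto simp: theta_adj_def path_adj_def split: if_splits)
    with 2 assms show ?thesis by simp
  next
    case 3
    then have "s \<ge> 2" "t \<le> a+b+c+2" by auto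
    have "{j. j < a+b+c+2 \<and> j \<noteq> i \<and> theta_adj a b c i j}
        = {j. j < a+b+c+2 \<and> j \<noteq> i \<and> path_adj s t i j}"
      using theta_adj_on_branch[OF 3] by simp
    also have "\<dots> = {if i = s then 0 else i - 1, if i = t - 1 then 1 else i + 1}"
      by (rule path_neighbours) (use 3 \<open>s \<ge> 2\<close> \<open>t \<le> a+b+c+2\<close> in auto)
    finally show ?thesis using 3 \<open>s \<ge> 2\<close> by auto
  qed
qed

lemma deg_Gmnp:
  assumes "b \<ge> 1" "c \<ge> 1" "i < a+b+c+2"
  shows "deg (a+b+c+2) (Gmnp_edges (a+b+2) (a+c+2) (a+1)) i = (if i \<le> 1 then 3 else 2)"
proof -
  have "{i,j} \<in> Gmnp_edges (a+b+2) (a+c+2) (a+1) \<longleftrightarrow> theta_adj a b c i j" if "j \<noteq> i" for j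
    using mem_Gmnp_edges_iff[OF not_sym[OF that]] .
  then have "{j. j < a+b+c+2 \<and> j \<noteq> i \<and> {i,j} \<in> Gmnp_edges (a+b+2) (a+c+2) (a+1)}
      = {j. j < a+b+c+2 \<and> j \<noteq> i \<and> theta_adj a b c i j}"
    by blast
  with theta_degree[OF assms] show ?thesis unfolding deg_def by presburger
qed

definition theta_mat :: "'a::comm_ring_1 \<Rightarrow> nat \<Rightarrow> nat \<Rightarrow> nat \<Rightarrow> nat \<Rightarrow> nat \<Rightarrow> 'a" where
  "theta_mat u a b c i j =
    (if i = j then (if i \<le> 1 then 1 + 2 * u^2 else 1 + u^2) else if theta_adj a b c i j then - u else 0)"

lemma Ihara_matrix_Gmnp:
  assumes "b \<ge> 1" "c \<ge> 1"
  shows "1\<^sub>m (a+b+c+2) - u \<cdot>\<^sub>m adj_mat (a+b+c+2) (Gmnp_edges (a+b+2) (a+c+2) (a+1))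
      + u^2 \<cdot>\<^sub>m Q_mat (a+b+c+2) (Gmnp_edges (a+b+2) (a+c+2) (a+1))
    = mat (a+b+c+2) (a+b+c+2) (\<lambda>(i,j). theta_mat u a b c i j)"
proof (rule eq_matI)
  fix i j assume "i < dim_row (mat (a+b+c+2) (a+b+c+2) (\<lambda>(i,j). theta_mat u a b c i j))"
    and "j < dim_col (mat (a+b+c+2) (a+b+c+2) (\<lambda>(i,j). theta_mat u a b c i j))"
  then have "i < a+b+c+2" "j < a+b+c+2" by auto
  then show "(1\<^sub>m (a+b+c+2) - u \<cdot>\<^sub>m adj_mat (a+b+c+2) (Gmnp_edges (a+b+2) (a+c+2) (a+1))
      + u^2 \<cdot>\<^sub>m Q_mat (a+b+c+2) (Gmnp_edges (a+b+2) (a+c+2) (a+1))) $$ (i,j)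
    = mat (a+b+c+2) (a+b+c+2) (\<lambda>(i,j). theta_mat u a b c i j) $$ (i,j)"
    using mem_Gmnp_edges_iff[of i j] deg_Gmnp[OF assms \<open>i < a+b+c+2\<close>]
    by (auto simp: adj_mat_def Q_mat_def theta_mat_def algebra_simps)
qed (auto simp: adj_mat_def Q_mat_def)

section \<open>Eliminating a branch\<close>

(* The determinant of the r x r tridiagonal matrix with diagonal 1 + u^2 and
   off-diagonal -u. *)
definition chain_det :: "'a::comm_ring_1 \<Rightarrow> nat \<Rightarrow> 'a" where
  "chain_det u r = (\<Sum>i\<le>r. (u^2)^i)"

lemma chain_det_0 [simp]: "chain_det u 0 = 1"
  by (simp add: chain_det_def)

lemma chain_det_Suc: "chain_det u (Suc r) = chain_det u r + (u^(r+1))^2"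
proof -
  have "(u^2)^(r+1) = (u^(r+1))^2" by (metis power_mult mult.commute)
  then show ?thesis by (simp add: chain_det_def)
qed

lemma chain_det_Suc_shift: "chain_det u (Suc r) = 1 + u^2 * chain_det u r"
  unfolding chain_det_def sum.atMost_Suc_shift by (simp add: sum_distrib_left)

lemma chain_det_1: "chain_det u (Suc 0) = 1 + u^2"
  by (simp add: chain_det_def)

lemma one_minus_square_mult_chain_det: "(1 - u^2) * chain_det u k = 1 - (u^(k+1))^2"
  unfolding chain_det_def sum_gp_basic by (simp flip: power_mult add: mult.commute power_mult_distrib)

(* What a branch with q internal vertices adds to the block of the branch vertices 0 and 1
   once its internal vertices are eliminated; for q = 0 the branch is the edge {0,1}. *)
definition path_corr :: "'a::field \<Rightarrow> nat \<Rightarrow> nat \<Rightarrow> nat \<Rightarrow> 'a" where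
  "path_corr u q i j =
    (if i = 0 \<and> j = 0 \<or> i = 1 \<and> j = 1 then - (1 - 1 / chain_det u q)
     else if i = 0 \<and> j = 1 \<or> i = 1 \<and> j = 0 then - (u^(q+1)) / chain_det u q else 0)"

(* A core B on {0..<s} with a branch from 0 to 1 through s, s+1, ..., of which k internal
   vertices remain after the last r have been eliminated: the eliminated part survives in
   the core entry (1,1), in the link from vertex s+k-1 to 1 and in the diagonal entry of
   s+k-1.  For r = 0 this is just B with the branch attached. *)
definition partial_path :: "'a::field \<Rightarrow> (nat \<Rightarrow> nat \<Rightarrow> 'a) \<Rightarrow> nat \<Rightarrow> nat \<Rightarrow> nat \<Rightarrow> nat \<Rightarrow> nat \<Rightarrow> 'a" where
  "partial_path u B s k r i j =
   (if i < s \<and> j < s then B i j - (if i = 1 \<and> j = 1 then 1 - 1 / chain_det u r else 0)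
    else if i < s then (if i = 0 \<and> j = s then - u else 0)
      + (if i = 1 \<and> j = s + k - 1 then - (u^(r+1)) / chain_det u r else 0)
    else if j < s then (if j = 0 \<and> i = s then - u else 0)
      + (if j = 1 \<and> i = s + k - 1 then - (u^(r+1)) / chain_det u r else 0)
    else if i = j then (if i = s + k - 1 then chain_det u (r+1) / chain_det u r else 1 + u^2)
    else if i = j + 1 \<or> j = i + 1 then - u else 0)"

lemma partial_path_off_core:
  assumes "s \<ge> 2" "k \<ge> 1" "i < s + k" "j < s + k" "\<not> (i < s \<and> j < s)"
  shows "partial_path u B s k 0 i j = (if i = j then 1 + u^2 else if path_adj s (s+k) i j then - u else 0)"
  using assms unfolding partial_path_def path_adj_def by (auto simp: chain_det_1)

lemma partial_path_add_core:
  assumes "s \<ge> 2" "\<And>i j. \<not> (i < 2 \<and> j < 2) \<Longrightarrow> C i j = 0"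
  shows "partial_path u (\<lambda>i j. B i j + C i j) s k r i j = partial_path u B s k r i j + C i j"
  using assms unfolding partial_path_def by auto

lemma theta_mat_eq_partial_path:
  fixes u :: "'a::field"
  assumes "(s, t) \<in> {(2, a+2), (a+2, a+b+2), (a+b+2, a+b+c+2)}" "s < t" "i < t" "j < t"
  shows "theta_mat u a b c i j = partial_path u (theta_mat u a b c) s (t - s) 0 i j"
proof (cases "i < s \<and> j < s")
  case True
  then show ?thesis by (simp add: partial_path_def)
next
  case False
  have "s \<ge> 2" using assms(1) by auto
  have "theta_adj a b c i j \<longleftrightarrow> path_adj s t i j"
    using False assms theta_adj_on_branch[OF assms(1)] theta_adj_sym path_adj_sym by (metis not_less)
  then show ?thesis
    using False assms \<open>s \<ge> 2\<close> partial_path_off_core[of s "t - s" i j u "theta_mat u a b c"]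
    by (auto simp: theta_mat_def)
qed

context
  fixes u :: "'a::field"
  assumes chain_det_nonzero: "\<And>r. chain_det u r \<noteq> 0"
begin

lemma partial_path_eliminate_last:
  assumes "s \<ge> 2" "i < s" "j < s"
  shows "partial_path u B s 1 r i j - partial_path u B s 1 r i s * partial_path u B s 1 r s j
      / partial_path u B s 1 r s s = B i j + path_corr u (r+1) i j"
proof -
  have "chain_det u r \<noteq> 0" "chain_det u (Suc r) \<noteq> 0" using chain_det_nonzero by auto
  with assms show ?thesis
    unfolding partial_path_def path_corr_def
    apply (auto simp: field_simps)
     apply (simp add: chain_det_Suc algebra_simps power2_eq_square)
    apply (simp add: chain_det_Suc_shift algebra_simps power2_eq_square)
    done
qed

lemma partial_path_eliminate_inner:
  assumes "s \<ge> 2" "k \<ge> 1" "i < s + k" "j < s + k"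
  shows "partial_path u B s (Suc k) r i j - partial_path u B s (Suc k) r i (s+k)
      * partial_path u B s (Suc k) r (s+k) j / partial_path u B s (Suc k) r (s+k) (s+k)
    = partial_path u B s k (Suc r) i j"
proof -
  have "chain_det u r \<noteq> 0" "chain_det u (Suc r) \<noteq> 0" "chain_det u (Suc (Suc r)) \<noteq> 0"
    using chain_det_nonzero by auto
  with assms show ?thesis
    unfolding partial_path_def
    apply (auto simp: field_simps)
     apply (simp add: chain_det_Suc_shift algebra_simps power2_eq_square)
    apply (simp add: chain_det_Suc algebra_simps power2_eq_square)
    done
qed

lemma det_partial_path:
  assumes "s \<ge> 2" "k \<ge> 1"
  shows "det (mat (s+k) (s+k) (\<lambda>(i,j). partial_path u B s k r i j))
    = chain_det u (r+k) / chain_det u r * det (mat s s (\<lambda>(i,j). B i j + path_corr u (r+k) i j))"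
proof -
  have Schur: "det (mat (s + Suc k) (s + Suc k) (\<lambda>(i,j). P i j))
      = chain_det u (Suc r) / chain_det u r
        * det (mat (s+k) (s+k) (\<lambda>(i,j). P i j - P i (s+k) * P (s+k) j / P (s+k) (s+k)))"
    if P: "P = partial_path u B s (Suc k) r" for P k r
  proof -
    let ?A = "mat (Suc (s+k)) (Suc (s+k)) (\<lambda>(i,j). P i j)"
    have corner: "?A $$ (s+k, s+k) = chain_det u (Suc r) / chain_det u r"
      using assms(1) by (simp add: P partial_path_def)
    have "det ?A = ?A $$ (s+k, s+k)
        * det (mat (s+k) (s+k) (\<lambda>(i,j). ?A $$ (i,j) - ?A $$ (i,s+k) * ?A $$ (s+k,j) / ?A $$ (s+k,s+k)))"
      by (rule det_Schur_last) (auto simp: corner chain_det_nonzero)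
    also have "mat (s+k) (s+k) (\<lambda>(i,j). ?A $$ (i,j) - ?A $$ (i,s+k) * ?A $$ (s+k,j) / ?A $$ (s+k,s+k))
        = mat (s+k) (s+k) (\<lambda>(i,j). P i j - P i (s+k) * P (s+k) j / P (s+k) (s+k))"
      by (rule eq_matI) auto
    finally show ?thesis by (simp add: corner)
  qed
  from assms(2) show ?thesis
  proof (induction k arbitrary: r rule: dec_induct)
    case base
    have "mat s s (\<lambda>(i,j). partial_path u B s 1 r i j - partial_path u B s 1 r i s
        * partial_path u B s 1 r s j / partial_path u B s 1 r s s)
      = mat s s (\<lambda>(i,j). B i j + path_corr u (r+1) i j)"
      by (rule eq_matI) (use partial_path_eliminate_last[OF assms(1)] in auto)
    then show ?case using Schur[of _ 0 r] by simp
  next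
    case (step k)
    have "mat (s+k) (s+k) (\<lambda>(i,j). partial_path u B s (Suc k) r i j - partial_path u B s (Suc k) r i (s+k)
        * partial_path u B s (Suc k) r (s+k) j / partial_path u B s (Suc k) r (s+k) (s+k))
      = mat (s+k) (s+k) (\<lambda>(i,j). partial_path u B s k (Suc r) i j)"
      by (rule eq_matI) (use partial_path_eliminate_inner[OF assms(1) step.hyps(1)] in auto)
    then show ?case
      using Schur[of _ k r] step.IH[of "Suc r"] chain_det_nonzero[of "Suc r"] by simp
  qed
qed

lemma det_attach_branch:
  assumes "s \<ge> 2" "k \<ge> 1" and M: "\<And>i j. i < s+k \<Longrightarrow> j < s+k \<Longrightarrow> M i j = partial_path u M s k 0 i j"
    and C: "\<And>i j. \<not> (i < 2 \<and> j < 2) \<Longrightarrow> C i j = 0"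
  shows "det (mat (s+k) (s+k) (\<lambda>(i,j). M i j + C i j))
    = chain_det u k * det (mat s s (\<lambda>(i,j). M i j + C i j + path_corr u k i j))"
proof -
  have "det (mat (s+k) (s+k) (\<lambda>(i,j). M i j + C i j))
      = det (mat (s+k) (s+k) (\<lambda>(i,j). partial_path u (\<lambda>i j. M i j + C i j) s k 0 i j))"
    using M partial_path_add_core[OF assms(1) C] by (intro det_mat_cong) simp
  also have "\<dots> = chain_det u k * det (mat s s (\<lambda>(i,j). M i j + C i j + path_corr u k i j))"
    using det_partial_path[OF assms(1,2)] by simp
  finally show ?thesis .
qed

lemma det_theta_first_branch:
  assumes C: "\<And>i j. \<not> (i < 2 \<and> j < 2) \<Longrightarrow> C i j = 0"
    and "b \<ge> 1" "c \<ge> 1"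
  shows "det (mat (a+2) (a+2) (\<lambda>(i,j). theta_mat u a b c i j + C i j))
    = chain_det u a * det (mat 2 2 (\<lambda>(i,j). (if i = j then 1 + 2 * u^2 else 0) + path_corr u a i j + C i j))"
proof (cases "a = 0")
  case True
  have "det (mat 2 2 (\<lambda>(i,j). theta_mat u 0 b c i j + C i j))
      = det (mat 2 2 (\<lambda>(i,j). (if i = j then 1 + 2 * u^2 else 0) + path_corr u 0 i j + C i j))"
    by (intro det_mat_cong) (auto simp: theta_mat_def path_corr_def theta_adj_def path_adj_def)
  with True show ?thesis by (simp add: numeral_2_eq_2)
next
  case False
  have "det (mat (2+a) (2+a) (\<lambda>(i,j). theta_mat u a b c i j + C i j))
      = chain_det u a * det (mat 2 2 (\<lambda>(i,j). theta_mat u a b c i j + C i j + path_corr u a i j))"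
    using False theta_mat_eq_partial_path[of 2 "a+2" a b c] by (intro det_attach_branch C) auto
  moreover have "det (mat 2 2 (\<lambda>(i,j). theta_mat u a b c i j + C i j + path_corr u a i j))
      = det (mat 2 2 (\<lambda>(i,j). (if i = j then 1 + 2 * u^2 else 0) + path_corr u a i j + C i j))"
    using False assms(2,3) by (intro det_mat_cong) (auto simp: theta_mat_def theta_adj_def path_adj_def)
  ultimately show ?thesis by (simp add: add.commute)
qed

lemma det_theta_mat:
  assumes "b \<ge> 1" "c \<ge> 1"
  shows "det (mat (a+b+c+2) (a+b+c+2) (\<lambda>(i,j). theta_mat u a b c i j))
    = chain_det u a * chain_det u b * chain_det u c * det (mat 2 2 (\<lambda>(i,j).
        (if i = j then 1 + 2 * u^2 else 0) + path_corr u a i j + path_corr u b i j + path_corr u c i j))"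
proof -
  let ?T = "theta_mat u a b c"
  have "det (mat ((a+b+2)+c) ((a+b+2)+c) (\<lambda>(i,j). ?T i j + 0))
      = chain_det u c * det (mat (a+b+2) (a+b+2) (\<lambda>(i,j). ?T i j + 0 + path_corr u c i j))"
    using assms theta_mat_eq_partial_path[of "a+b+2" "a+b+c+2" a b c] by (intro det_attach_branch) auto
  moreover have "det (mat ((a+2)+b) ((a+2)+b) (\<lambda>(i,j). ?T i j + path_corr u c i j))
      = chain_det u b * det (mat (a+2) (a+2) (\<lambda>(i,j). ?T i j + path_corr u c i j + path_corr u b i j))"
    using assms theta_mat_eq_partial_path[of "a+2" "a+b+2" a b c]
    by (intro det_attach_branch) (auto simp: path_corr_def)
  moreover have "det (mat (a+2) (a+2) (\<lambda>(i,j). ?T i j + (path_corr u c i j + path_corr u b i j)))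
      = chain_det u a * det (mat 2 2 (\<lambda>(i,j).
        (if i = j then 1 + 2 * u^2 else 0) + path_corr u a i j + (path_corr u c i j + path_corr u b i j)))"
    using assms by (intro det_theta_first_branch) (auto simp: path_corr_def)
  ultimately show ?thesis by (simp add: ac_simps)
qed

end

section \<open>The closed form\<close>

definition theta_poly :: "'a::comm_ring_1 \<Rightarrow> 'a \<Rightarrow> 'a \<Rightarrow> 'a" where
  "theta_poly X Y Z = - 4 * X^2 * Y^2 * Z^2 + Y^2 * Z^2 + 2 * X * Y * Z^2 + 2 * X * Y^2 * Z
    + X^2 * Z^2 + X^2 * Y^2 + 2 * X^2 * Y * Z - 2 * Y * Z - 2 * X * Z - 2 * X * Y + 1"

lemma theta_poly_factorization:
  fixes X Y Z :: "'a::comm_ring_1"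
  defines "A \<equiv> 1 - X^2" and "B \<equiv> 1 - Y^2" and "C \<equiv> 1 - Z^2"
  shows "(B*C + A*C + A*B - 2*A*B*C)^2 - (X*B*C + Y*A*C + Z*A*B)^2 = A*B*C * theta_poly X Y Z"
  unfolding A_def B_def C_def theta_poly_def by (simp add: algebra_simps power2_eq_square)

lemma theta_Schur_value:
  fixes u X Y Z Da Db Dc :: "'a::field"
  assumes K: "1 - u^2 \<noteq> 0"
    and Da: "(1 - u^2) * Da = 1 - X^2" and Db: "(1 - u^2) * Db = 1 - Y^2" and Dc: "(1 - u^2) * Dc = 1 - Z^2"
    and nz: "Da \<noteq> 0" "Db \<noteq> 0" "Dc \<noteq> 0"
  shows "(1 - u^2) * (Da * Db * Dc * ((1 + 2 * u^2 - (1 - 1/Da) - (1 - 1/Db) - (1 - 1/Dc))^2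
      - (X/Da + Y/Db + Z/Dc)^2)) = theta_poly X Y Z"
proof -
  define K A B C where "K = 1 - u^2" and "A = 1 - X^2" and "B = 1 - Y^2" and "C = 1 - Z^2"
  have ABC: "A \<noteq> 0" "B \<noteq> 0" "C \<noteq> 0" using K nz Da Db Dc unfolding K_def A_def B_def C_def by auto
  have inv: "1/Da = K/A" "1/Db = K/B" "1/Dc = K/C"
    using K nz Da Db Dc ABC unfolding K_def A_def B_def C_def by (auto simp: field_simps)
  have diag: "1 + 2 * u^2 - (1 - 1/Da) - (1 - 1/Db) - (1 - 1/Dc) = K * (B*C + A*C + A*B - 2*A*B*C) / (A*B*C)"
    unfolding inv using ABC by (simp add: K_def field_simps)
  have "X/Da + Y/Db + Z/Dc = X * (1/Da) + Y * (1/Db) + Z * (1/Dc)" by simp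
  also have "\<dots> = K * (X*B*C + Y*A*C + Z*A*B) / (A*B*C)"
    unfolding inv using ABC by (simp add: field_simps)
  finally have off: "X/Da + Y/Db + Z/Dc = K * (X*B*C + Y*A*C + Z*A*B) / (A*B*C)" .
  have "A*B*C = K^3 * (Da * Db * Dc)"
    unfolding A_def B_def C_def K_def by (simp flip: Da Db Dc add: power3_eq_cube ac_simps)
  with K have prod: "Da * Db * Dc = A*B*C / K^3" unfolding K_def by simp
  have scale: "K * (N / K^3 * ((K * P / N)^2 - (K * Q / N)^2)) = (P^2 - Q^2) / N" if "N \<noteq> 0" for N P Q
    using K that unfolding K_def[symmetric] by (simp add: field_simps power2_eq_square power3_eq_cube)
  have fac: "(B*C + A*C + A*B - 2*A*B*C)^2 - (X*B*C + Y*A*C + Z*A*B)^2 = A*B*C * theta_poly X Y Z"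
    unfolding A_def B_def C_def by (rule theta_poly_factorization)
  have "A * B * C \<noteq> 0" using ABC by simp
  then show ?thesis
    unfolding diag off prod K_def[symmetric] scale[OF \<open>A * B * C \<noteq> 0\<close>] fac by simp
qed

lemma det_theta_mat_closed_form:
  fixes u :: "'a::field"
  assumes "b \<ge> 1" "c \<ge> 1" and "1 - u^2 \<noteq> 0" and D: "\<And>r. chain_det u r \<noteq> 0"
  shows "(1 - u^2) * det (mat (a+b+c+2) (a+b+c+2) (\<lambda>(i,j). theta_mat u a b c i j))
    = theta_poly (u^(a+1)) (u^(b+1)) (u^(c+1))"
proof -
  have "det (mat 2 2 (\<lambda>(i,j). (if i = j then 1 + 2 * u^2 else 0)
        + path_corr u a i j + path_corr u b i j + path_corr u c i j))
    = (1 + 2 * u^2 - (1 - 1 / chain_det u a) - (1 - 1 / chain_det u b) - (1 - 1 / chain_det u c))^2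
      - (u^(a+1) / chain_det u a + u^(b+1) / chain_det u b + u^(c+1) / chain_det u c)^2"
    by (simp add: det_mat_2 path_corr_def power2_eq_square algebra_simps del: power_Suc)
  then show ?thesis
    using det_theta_mat[OF D assms(1,2), of a] theta_Schur_value[OF assms(3)
        one_minus_square_mult_chain_det one_minus_square_mult_chain_det one_minus_square_mult_chain_det D D D]
    by simp
qed

lemma (in comm_ring_hom) hom_theta_mat: "hom (theta_mat u a b c i j) = theta_mat (hom u) a b c i j"
  by (simp add: theta_mat_def hom_distribs)

lemma poly_det_theta_mat:
  "poly (det (mat N N (\<lambda>(i,j). theta_mat [:0, 1:] a b c i j))) v = det (mat N N (\<lambda>(i,j). theta_mat v a b c i j))"
proof -
  interpret h: comm_ring_hom "\<lambda>p. poly p v"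
    by unfold_locales (auto simp: poly_mult)
  have mat: "map_mat (\<lambda>p. poly p v) (mat N N (\<lambda>(i,j). theta_mat [:0, 1:] a b c i j))
      = mat N N (\<lambda>(i,j). theta_mat v a b c i j)"
    by (rule eq_matI) (auto simp: h.hom_theta_mat)
  show ?thesis unfolding h.hom_det[symmetric] mat ..
qed

lemma poly_eqI_infinite:
  fixes p q :: "'a::idom poly"
  assumes "infinite S" "\<And>x. x \<in> S \<Longrightarrow> poly p x = poly q x"
  shows "p = q"
proof -
  have "S \<subseteq> {x. poly (p - q) x = 0}" using assms(2) by auto
  then have "infinite {x. poly (p - q) x = 0}" using assms(1) finite_subset by blast
  then have "p - q = 0" using poly_roots_finite by blast
  then show ?thesis by simp
qed

lemma chain_det_real_ge_1: "chain_det (x::real) r \<ge> 1"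
proof (induction r)
  case (Suc r)
  then have "0 \<le> x^2 * chain_det x r" by simp
  then show ?case by (simp add: chain_det_Suc_shift)
qed simp

lemma infinite_unit_interval: "infinite (complex_of_real ` {0<..<1})"
proof
  assume "finite (complex_of_real ` {0<..<1})"
  moreover have "inj_on complex_of_real {0<..<1}" by (simp add: inj_on_def)
  ultimately have "finite {0<..<1::real}" by (rule finite_imageD)
  then show False using infinite_Ioo[of 0 "1::real"] by simp
qed

lemma ihara_zeta_inv_Gmnp:
  assumes "b \<ge> 1" "c \<ge> 1"
  shows "ihara_zeta_inv (a+b+c+2) (Gmnp_edges (a+b+2) (a+c+2) (a+1)) u
    = theta_poly (u^(a+1)) (u^(b+1)) (u^(c+1))"
proof -
  let ?N = "a+b+c+2"
  have zeta: "ihara_zeta_inv ?N (Gmnp_edges (a+b+2) (a+c+2) (a+1)) u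
      = (1 - u^2) * det (mat ?N ?N (\<lambda>(i,j). theta_mat u a b c i j))"
  proof -
    have "int (card (Gmnp_edges (a+b+2) (a+c+2) (a+1))) - int ?N = 1"
      using card_Gmnp_edges[OF assms] by simp
    then show ?thesis
      unfolding ihara_zeta_inv_def Ihara_matrix_Gmnp[OF assms] by (simp only: power_int_1_right)
  qed
  define P :: "complex poly" where "P = [:1, 0, -1:] * det (mat ?N ?N (\<lambda>(i,j). theta_mat [:0, 1:] a b c i j))"
  define R :: "complex poly" where "R = theta_poly (monom 1 (a+1)) (monom 1 (b+1)) (monom 1 (c+1))"
  have eval_P: "poly P v = (1 - v^2) * det (mat ?N ?N (\<lambda>(i,j). theta_mat v a b c i j))" for v
  proof -
    have "poly P v = poly [:1, 0, -1:] v * poly (det (mat ?N ?N (\<lambda>(i,j). theta_mat [:0, 1:] a b c i j))) v"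
      unfolding P_def by (rule poly_mult)
    also have "poly [:1, 0, -1:] v = 1 - v^2" by (simp add: power2_eq_square)
    finally show ?thesis by (simp only: poly_det_theta_mat)
  qed
  have eval_R: "poly R v = theta_poly (v^(a+1)) (v^(b+1)) (v^(c+1))" for v
    by (simp add: R_def theta_poly_def poly_monom)
  have "P = R"
  proof (rule poly_eqI_infinite)
    show "infinite (complex_of_real ` {0<..<1})" by (rule infinite_unit_interval)
  next
    fix v assume "v \<in> complex_of_real ` {0<..<1}"
    then obtain x where x: "0 < x" "x < 1" and v: "v = complex_of_real x" by auto
    have "x^2 < 1" using x by (simp add: power_less_one_iff)
    then have "1 - x^2 \<noteq> 0" by simp
    then have "1 - v^2 \<noteq> 0" unfolding v by (metis of_real_1 of_real_diff of_real_eq_0_iff of_real_power)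
    moreover have "chain_det v r \<noteq> 0" for r
    proof -
      have "chain_det v r = of_real (chain_det x r)"
        unfolding v chain_det_def by (simp add: of_real_sum)
      then show ?thesis using chain_det_real_ge_1[of x r] by simp
    qed
    ultimately show "poly P v = poly R v"
      unfolding eval_P eval_R by (rule det_theta_mat_closed_form[OF assms])
  qed
  then show ?thesis unfolding zeta eval_R[symmetric] eval_P[symmetric] by simp
qed

lemma theta_poly_powers:
  "theta_poly (u^x) (u^y) (u^z :: 'a::comm_ring_1) =
    - 4 * u^(2*x+2*y+2*z) + u^(2*y+2*z) + 2 * u^(x+y+2*z) + 2 * u^(x+2*y+z)
    + u^(2*x+2*z) + u^(2*x+2*y) + 2 * u^(2*x+y+z) - 2 * u^(y+z) - 2 * u^(x+z) - 2 * u^(x+y) + 1"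
  unfolding theta_poly_def by (simp only: power_add power_mult[symmetric] mult.commute[of _ 2] mult.assoc)

theorem mainTheorem6:
  fixes m n p :: nat and u :: complex
  assumes "p > 0" and "m > max (p+1) 2" and "n > max (p+1) 2"
  shows "ihara_zeta_inv (Gmnp_vertices m n p) (Gmnp_edges m n p) u =
    - 4 * u^(2*m+2*n-2*p) + u^(2*m+2*n-4*p) + 2 * u^(m+2*n-2*p) + 2 * u^(2*m+n-2*p)
    + u^(2*n) + u^(2*m) + 2 * u^(m+n) - 2 * u^(m+n-2*p) - 2 * u^n - 2 * u^m + 1"
proof -
  define a b c where "a = p - 1" and "b = m - p - 1" and "c = n - p - 1"
  have "b \<ge> 1" "c \<ge> 1" using assms by (simp_all add: b_def c_def)
  moreover have "a+b+c+2 = Gmnp_vertices m n p" "a+b+2 = m" "a+c+2 = n" "a+1 = p" "b+1 = m-p" "c+1 = n-p"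
    using assms by (auto simp: a_def b_def c_def Gmnp_vertices_def)
  ultimately have "ihara_zeta_inv (Gmnp_vertices m n p) (Gmnp_edges m n p) u
      = theta_poly (u^p) (u^(m-p)) (u^(n-p))"
    using ihara_zeta_inv_Gmnp[of b c a u] by simp
  also have "\<dots> = - 4 * u^(2*m+2*n-2*p) + u^(2*m+2*n-4*p) + 2 * u^(m+2*n-2*p) + 2 * u^(2*m+n-2*p)
      + u^(2*n) + u^(2*m) + 2 * u^(m+n) - 2 * u^(m+n-2*p) - 2 * u^n - 2 * u^m + 1"
  proof -
    have "2*p+2*(m-p)+2*(n-p) = 2*m+2*n-2*p" "2*(m-p)+2*(n-p) = 2*m+2*n-4*p"
      "p+(m-p)+2*(n-p) = m+2*n-2*p" "p+2*(m-p)+(n-p) = 2*m+n-2*p" "2*p+2*(n-p) = 2*n"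
      "2*p+2*(m-p) = 2*m" "2*p+(m-p)+(n-p) = m+n" "(m-p)+(n-p) = m+n-2*p" "p+(n-p) = n" "p+(m-p) = m"
      using assms by auto
    then show ?thesis unfolding theta_poly_powers by (simp only:)
  qed
  finally show ?thesis .
qed

end
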